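(* Let $V$ be a real vector space of dimension $2n$ endowed with a linear map $J:V\to V$ with $J^2=-\mathrm{Id}$, and let $T_1,T_2$ be two $(0,6)$-tensors on $V$ such that, for $i=1,2$ and all $x_1,\dots,x_6\in V$: (a) $T_i(x_1,x_2,x_3,x_4,x_5,x_6)=-T_i(x_2,x_1,x_3,x_4,x_5,x_6)=-T_i(x_1,x_2,x_4,x_3,x_5,x_6)=T_i(x_3,x_4,x_1,x_2,x_5,x_6)$; (b) $T_i(x_1,x_2,x_3,x_4,x_5,x_6)+T_i(x_1,x_3,x_4,x_2,x_5,x_6)+T_i(x_1,x_4,x_2,x_3,x_5,x_6)=0$; (c) $T_i(x_1,x_2,x_3,x_4,x_5,x_6)=T_i(Jx_1,Jx_2,x_3,x_4,x_5,x_6)=T_i(x_1,x_2,Jx_3,Jx_4,x_5,x_6)$; (d) $T_i(x_1,x_2,x_3,x_4,x_5,x_6)=-T_i(x_1,x_2,x_3,x_4,x_6,x_5)=T_i(x_1,x_2,x_3,x_4,Jx_5,Jx_6)$. If $T_1(u,Ju,Ju,u,v,Jv)=T_2(u,Ju,Ju,u,v,Jv)$ for all $u,v\in V$, then $T_1=T_2$. *)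

theory Defs
  imports "HOL-Analysis.Analysis"
begin

definition tensor06 :: "('a::real_vector \<Rightarrow> 'a \<Rightarrow> 'a \<Rightarrow> 'a \<Rightarrow> 'a \<Rightarrow> 'a \<Rightarrow> real) \<Rightarrow> bool" where
  "tensor06 T \<longleftrightarrow>
     (\<forall>x2 x3 x4 x5 x6. linear (\<lambda>x. T x x2 x3 x4 x5 x6)) \<and>
     (\<forall>x1 x3 x4 x5 x6. linear (\<lambda>x. T x1 x x3 x4 x5 x6)) \<and>
     (\<forall>x1 x2 x4 x5 x6. linear (\<lambda>x. T x1 x2 x x4 x5 x6)) \<and>
     (\<forall>x1 x2 x3 x5 x6. linear (\<lambda>x. T x1 x2 x3 x x5 x6)) \<and>
     (\<forall>x1 x2 x3 x4 x6. linear (\<lambda>x. T x1 x2 x3 x4 x x6)) \<and>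
     (\<forall>x1 x2 x3 x4 x5. linear (\<lambda>x. T x1 x2 x3 x4 x5 x))"

definition sym_conds :: "('a::real_vector \<Rightarrow> 'a) \<Rightarrow> ('a \<Rightarrow> 'a \<Rightarrow> 'a \<Rightarrow> 'a \<Rightarrow> 'a \<Rightarrow> 'a \<Rightarrow> real) \<Rightarrow> bool" where
  "sym_conds J T \<longleftrightarrow>
     (\<forall>x1 x2 x3 x4 x5 x6.
        T x1 x2 x3 x4 x5 x6 = - T x2 x1 x3 x4 x5 x6 \<and>
        T x1 x2 x3 x4 x5 x6 = - T x1 x2 x4 x3 x5 x6 \<and>
        T x1 x2 x3 x4 x5 x6 = T x3 x4 x1 x2 x5 x6 \<and>
        T x1 x2 x3 x4 x5 x6 + T x1 x3 x4 x2 x5 x6 + T x1 x4 x2 x3 x5 x6 = 0 \<and>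
        T x1 x2 x3 x4 x5 x6 = T (J x1) (J x2) x3 x4 x5 x6 \<and>
        T x1 x2 x3 x4 x5 x6 = T x1 x2 (J x3) (J x4) x5 x6 \<and>
        T x1 x2 x3 x4 x5 x6 = - T x1 x2 x3 x4 x6 x5 \<and>
        T x1 x2 x3 x4 x5 x6 = T x1 x2 x3 x4 (J x5) (J x6))"

end

theory Submission
  imports Defs
begin

text \<open>
  By (a)--(d) the difference \<open>T = T\<^sub>1 - T\<^sub>2\<close> satisfies all hypotheses with
  \<open>T(u,Ju,Ju,u,v,Jv) = 0\<close>. The form \<open>(v,w) \<mapsto> T(u,Ju,Ju,u,v,Jw)\<close> is symmetric by (d),
  so polarization gives \<open>T(u,Ju,Ju,u,a,b) = 0\<close> for all \<open>a, b\<close>. Fix \<open>a, b\<close>; then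
  \<open>R(x,y,z,w) = T(x,y,z,w,a,b)\<close> is an algebraic curvature tensor with vanishing holomorphic
  sectional curvature. Expanding \<open>R(u,Ju,Ju,u)\<close> at \<open>u = x \<plusminus> y\<close> yields \<open>K + 3L = 0\<close> for
  \<open>K = R(x,y,y,x)\<close>, \<open>L = R(x,Jy,Jy,x)\<close>; replacing \<open>y\<close> by \<open>Jy\<close> swaps \<open>K\<close> and \<open>L\<close>, hence
  \<open>K = 0\<close>. A curvature tensor with vanishing sectional curvature is zero.
\<close>

lemma tensor06_diff:
  assumes "tensor06 T1" and "tensor06 T2"
  shows "tensor06 (T1 - T2)"
  using assms unfolding tensor06_def fun_diff_def by (auto intro: linear_compose_sub)

lemma sym_conds_diff:
  assumes "sym_conds J T1" and "sym_conds J T2"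
  shows "sym_conds J (T1 - T2)"
  unfolding sym_conds_def fun_diff_def
  apply (intro allI)
  subgoal for x1 x2 x3 x4 x5 x6
    using assms[unfolded sym_conds_def, rule_format, of x1 x2 x3 x4 x5 x6] by (elim conjE) linarith
  done

locale algebraic_curvature_tensor =
  fixes R :: "'a::real_vector \<Rightarrow> 'a \<Rightarrow> 'a \<Rightarrow> 'a \<Rightarrow> real"
  assumes linear_slot1: "linear (\<lambda>x. R x y z w)"
    and linear_slot2: "linear (\<lambda>y. R x y z w)"
    and linear_slot3: "linear (\<lambda>z. R x y z w)"
    and linear_slot4: "linear (\<lambda>w. R x y z w)"
    and skew12: "R x y z w = - R y x z w"
    and skew34: "R x y z w = - R x y w z"
    and pair_symmetric: "R x y z w = R z w x y"
    and bianchi: "R x y z w + R x z w y + R x w y z = 0"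
begin

lemmas add_slots =
  linear_slot1[THEN linear_add] linear_slot2[THEN linear_add]
  linear_slot3[THEN linear_add] linear_slot4[THEN linear_add]

lemma eq_zero_if_sectional_zero:
  assumes sectional_zero: "\<And>x y. R x y y x = 0"
  shows "R x y z w = 0"
proof -
  have middle_skew: "R x y y z = 0" for x y z
  proof -
    have "R z y y x = R x y y z"
      using pair_symmetric[of z y y x] skew12[of y x z y] skew34[of x y z y] by simp
    then show ?thesis
      using sectional_zero[of "x + z" y] sectional_zero[of x y] sectional_zero[of z y]
      by (simp add: add_slots)
  qed
  have middle_swap: "R x y w z = - R x w y z" for x y w z
    using middle_skew[of x "y + w" z] middle_skew[of x y z] middle_skew[of x w z]
    by (simp add: add_slots)
  have "R x z w y = R x y z w" and "R x w y z = R x y z w"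
    using middle_swap[of x z w y] middle_swap[of x w y z] skew34[of x w z y] skew34[of x y z w]
    by simp_all
  with bianchi[of x y z w] show ?thesis by linarith
qed

end

locale kaehler_tensor =
  fixes J :: "'a::real_vector \<Rightarrow> 'a"
    and T :: "'a \<Rightarrow> 'a \<Rightarrow> 'a \<Rightarrow> 'a \<Rightarrow> 'a \<Rightarrow> 'a \<Rightarrow> real"
  assumes linear_J: "linear J"
    and J_J [simp]: "J (J x) = - x"
    and multilinear: "tensor06 T"
    and symmetries: "sym_conds J T"
begin

lemmas J_add [simp] = linear_add[OF linear_J]
  and J_minus [simp] = linear_neg[OF linear_J]
  and J_diff [simp] = linear_diff[OF linear_J]

lemma linear_slots:
  "linear (\<lambda>x. T x x2 x3 x4 x5 x6)" "linear (\<lambda>x. T x1 x x3 x4 x5 x6)"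
  "linear (\<lambda>x. T x1 x2 x x4 x5 x6)" "linear (\<lambda>x. T x1 x2 x3 x x5 x6)"
  "linear (\<lambda>x. T x1 x2 x3 x4 x x6)" "linear (\<lambda>x. T x1 x2 x3 x4 x5 x)"
  using multilinear unfolding tensor06_def by auto

lemmas add_slots = linear_slots[THEN linear_add]
  and minus_slots = linear_slots[THEN linear_neg]
  and diff_slots = linear_slots[THEN linear_diff]

lemma skew12: "T x1 x2 x3 x4 x5 x6 = - T x2 x1 x3 x4 x5 x6"
  and skew34: "T x1 x2 x3 x4 x5 x6 = - T x1 x2 x4 x3 x5 x6"
  and pair_symmetric: "T x1 x2 x3 x4 x5 x6 = T x3 x4 x1 x2 x5 x6"
  and bianchi: "T x1 x2 x3 x4 x5 x6 + T x1 x3 x4 x2 x5 x6 + T x1 x4 x2 x3 x5 x6 = 0"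
  and J_invariant12: "T (J x1) (J x2) x3 x4 x5 x6 = T x1 x2 x3 x4 x5 x6"
  and J_invariant34: "T x1 x2 (J x3) (J x4) x5 x6 = T x1 x2 x3 x4 x5 x6"
  and skew56: "T x1 x2 x3 x4 x5 x6 = - T x1 x2 x3 x4 x6 x5"
  and J_invariant56: "T x1 x2 x3 x4 (J x5) (J x6) = T x1 x2 x3 x4 x5 x6"
  using symmetries unfolding sym_conds_def by (blast intro: sym)+

lemma algebraic_curvature_tensor: "algebraic_curvature_tensor (\<lambda>x y z w. T x y z w a b)"
  by (rule algebraic_curvature_tensor.intro) (rule linear_slots skew12 skew34 pair_symmetric bianchi)+

context
  assumes holomorphic_zero: "\<And>u v. T u (J u) (J u) u v (J v) = 0"
begin

lemma holomorphic_sectional_zero: "T u (J u) (J u) u a b = 0"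
proof -
  define B where "B v w = T u (J u) (J u) u v (J w)" for v w
  have symmetric: "B w v = B v w" for v w
    using J_invariant56[of u "J u" "J u" u w "J v"] skew56[of u "J u" "J u" u "J w" v]
    by (simp add: B_def minus_slots)
  have "B v w = 0" for v w
    using holomorphic_zero[of u "v + w"] holomorphic_zero[of u v] holomorphic_zero[of u w] symmetric[of v w]
    by (simp add: B_def add_slots)
  from this[of a "- J b"] show ?thesis
    by (simp add: B_def minus_slots)
qed

lemma sectional_zero: "T x y y x a b = 0"
proof -
  define K where "K x y = T x y y x a b" for x y
  define L where "L x y = T x (J y) (J y) x a b" for x y
  have polarized: "K x y + 3 * L x y = 0" for x y
  proof -
    have
      "T (x + y) (J (x + y)) (J (x + y)) (x + y) a b + T (x - y) (J (x - y)) (J (x - y)) (x - y) a b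
        = 2 * T x (J x) (J x) x a b + 2 * T y (J y) (J y) y a b
          + 2 * (T x (J x) (J y) y a b + T y (J y) (J x) x a b + T x (J y) (J x) y a b
                 + T y (J x) (J y) x a b + T y (J x) (J x) y a b + T x (J y) (J y) x a b)"
      by (simp add: add_slots diff_slots algebra_simps)
    moreover have "T x (J x) (J y) y a b = K x y + L x y"
      using bianchi[of x "J x" y "J y" a b] skew34[of x "J x" y "J y" a b]
        J_invariant34[of x y y x a b] J_invariant34[of x "J y" x "J y" a b] skew34[of x "J y" x "J y" a b]
      by (simp add: K_def L_def minus_slots)
    moreover have "T y (J y) (J x) x a b = T x (J x) (J y) y a b"
      using pair_symmetric[of y "J y" "J x" x a b] skew12[of "J x" x y "J y" a b] skew34[of x "J x" "J y" y a b]
      by simp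
    moreover have "T x (J y) (J x) y a b = L x y"
      using J_invariant34[of x "J y" x "J y" a b] skew34[of x "J y" x "J y" a b]
      by (simp add: L_def minus_slots)
    moreover have "T y (J x) (J y) x a b = T x (J y) (J x) y a b"
      using pair_symmetric[of y "J x" "J y" x a b] skew12[of "J y" x y "J x" a b] skew34[of x "J y" "J x" y a b]
      by simp
    moreover have "T y (J x) (J x) y a b = L x y"
      using pair_symmetric[of y "J x" "J x" y a b] J_invariant12[of "J x" y y "J x" a b]
        J_invariant34[of "- x" "J y" "J y" x a b]
      by (simp add: L_def minus_slots)
    ultimately show ?thesis
      using holomorphic_sectional_zero[of "x + y"] holomorphic_sectional_zero[of "x - y"]
        holomorphic_sectional_zero[of x] holomorphic_sectional_zero[of y]
      by (simp add: L_def)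
  qed
  have "K x (J y) = L x y" and "L x (J y) = K x y"
    by (simp_all add: K_def L_def minus_slots)
  with polarized[of x y] polarized[of x "J y"] have "K x y = 0"
    by linarith
  then show ?thesis
    by (simp add: K_def)
qed

end

lemma eq_zero_if_holomorphic_zero:
  assumes "\<And>u v. T u (J u) (J u) u v (J v) = 0"
  shows "T = (\<lambda>_ _ _ _ _ _. 0)"
proof (intro ext)
  fix x1 x2 x3 x4 x5 x6
  interpret algebraic_curvature_tensor "\<lambda>x y z w. T x y z w x5 x6"
    by (rule algebraic_curvature_tensor)
  show "T x1 x2 x3 x4 x5 x6 = 0"
    using eq_zero_if_sectional_zero sectional_zero[OF assms] by simp
qed

end

theorem mainTheorem2:
  fixes J :: "'a::euclidean_space \<Rightarrow> 'a"
    and T1 T2 :: "'a \<Rightarrow> 'a \<Rightarrow> 'a \<Rightarrow> 'a \<Rightarrow> 'a \<Rightarrow> 'a \<Rightarrow> real"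
    and n :: nat
  assumes "DIM('a) = 2 * n"
    and "linear J"
    and "\<And>x. J (J x) = - x"
    and "tensor06 T1" and "tensor06 T2"
    and "sym_conds J T1" and "sym_conds J T2"
    and "\<And>u v. T1 u (J u) (J u) u v (J v) = T2 u (J u) (J u) u v (J v)"
  shows "T1 = T2"
proof -
  interpret kaehler_tensor J "T1 - T2"
    using assms(2,3) tensor06_diff[OF assms(4,5)] sym_conds_diff[OF assms(6,7)]
    by (rule kaehler_tensor.intro)
  have "T1 - T2 = (\<lambda>_ _ _ _ _ _. 0)"
    by (rule eq_zero_if_holomorphic_zero) (simp add: assms(8))
  then show ?thesis
    by (simp add: fun_eq_iff)
qed

end
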